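(* Let $f:X\to\mathcal G$ be convex and $x_0\in\operatorname{dom} f$. If $x_0$ solves the strict set-valued Minty inequality, i.e. $f'(x,x_0-x)\supseteq 0^+f(x_0)$ for all $x\in X$, then it solves the strict scalarized Minty inequality, i.e. $\varphi'_{f,z^*}(x,x_0-x)\le0$ for all $x\in X$ and $z^*\in C^-\setminus\{0\}$. If additionally the weak regularity condition $f'(x,u)=\bigcap_{z^*\in C^-\setminus\{0\}}f'_{z^*}(x,u)$ holds for all $x,u\in X$, then the reverse implication holds as well.
   Context: $X$ real linear space, $Z$ real locally convex Hausdorff space with dual $Z^*$, $C\subseteq Z$ closed convex cone, $0\in C$, $C^-=\{z^*:z^*(c)\le0\ \forall c\in C\}$, $C^-\setminus\{0\}\ne\emptyset$. $\mathcal G=\{A\subseteq Z:A=\operatorname{cl}\operatorname{co}(A+C)\}$; $A\oplus B=\operatorname{cl}\{a+b\}$, $tA=\{ta\}$ ($t>0$), $A\ominus B=\{z:B+\{z\}\subseteq A\}$; $0^+A=\{z:A+\{z\}\subseteq A\}$ for $A\ne\emptyset$. $f$ convex: $f(tx_1+(1-t)x_2)\supseteq tf(x_1)\oplus(1-t)f(x_2)$; $\operatorname{dom}f=\{x:f(x)\neq\emptyset\}$. For $g:X\to\mathcal G$, $g'(x,u)=\bigcap_{t_0>0}\operatorname{cl}\operatorname{co}\bigcup_{0<t<t_0}\frac1t(g(x+tu)\ominus g(x))$. On $\overline{\mathbb R}$: inf-addition $\dot+$ ($(-\infty)\dot+(+\infty)=+\infty$), $r\ominus s=\inf\{t\in\mathbb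 R:r\le s\dot+t\}$ ($\inf\emptyset=+\infty$). $\varphi_{f,z^*}(x)=\inf\{-z^*(z):z\in f(x)\}$ ($+\infty$ if $f(x)=\emptyset$), $\varphi'_{f,z^*}(x,u)=\inf_{t>0}\frac1t(\varphi_{f,z^*}(x+tu)\ominus\varphi_{f,z^*}(x))$. $f_{z^*}(x)=\{z:\varphi_{f,z^*}(x)\le -z^*(z)\}$, and $f'_{z^*}$ is the directional derivative of $f_{z^*}$. *)

theory Defs
  imports "HOL-Analysis.Analysis"
begin

(* Z is a real locally convex Hausdorff topological vector space.
   Hausdorff comes from the type class t2_space; the rest is this predicate. *)
definition lc_tvs :: "'z::{real_vector,topological_space} itself \<Rightarrow> bool" where
  "lc_tvs _ \<longleftrightarrow>
     continuous_on UNIV (\<lambda>p::'z \<times> 'z. fst p + snd p) \<and>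
     continuous_on UNIV (\<lambda>p::real \<times> 'z. fst p *\<^sub>R snd p) \<and>
     (\<forall>U::'z set. open U \<and> 0 \<in> U \<longrightarrow> (\<exists>V. open V \<and> convex V \<and> 0 \<in> V \<and> V \<subseteq> U))"

definition dualsp :: "('z::{real_vector,topological_space} \<Rightarrow> real) set" where
  "dualsp = {zs. linear zs \<and> continuous_on UNIV zs}"

definition negdual :: "'z::{real_vector,topological_space} set \<Rightarrow> ('z \<Rightarrow> real) set" where
  "negdual C = {zs \<in> dualsp. \<forall>c\<in>C. zs c \<le> 0}"

definition setplus :: "'z::real_vector set \<Rightarrow> 'z set \<Rightarrow> 'z set" where
  "setplus A B = {a + b | a b. a \<in> A \<and> b \<in> B}"

definition setscale :: "real \<Rightarrow> 'z::real_vector set \<Rightarrow> 'z set" where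
  "setscale t A = {t *\<^sub>R a | a. a \<in> A}"

definition GC :: "'z::{real_vector,topological_space} set \<Rightarrow> 'z set set" where
  "GC C = {A. A = closure (convex hull (setplus A C))}"

definition oplus :: "'z::{real_vector,topological_space} set \<Rightarrow> 'z set \<Rightarrow> 'z set" where
  "oplus A B = closure (setplus A B)"

definition ominus :: "'z::real_vector set \<Rightarrow> 'z set \<Rightarrow> 'z set" where
  "ominus A B = {z. setplus B {z} \<subseteq> A}"

(* recession cone 0^+A (used only for nonempty A) *)
definition recc :: "'z::real_vector set \<Rightarrow> 'z set" where
  "recc A = {z. setplus A {z} \<subseteq> A}"

definition sv_convex :: "('x::real_vector \<Rightarrow> 'z::{real_vector,topological_space} set) \<Rightarrow> bool" where
  "sv_convex f \<longleftrightarrow> (\<forall>x1 x2 t. 0 < t \<and> t < 1 \<longrightarrow>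
      oplus (setscale t (f x1)) (setscale (1 - t) (f x2)) \<subseteq> f (t *\<^sub>R x1 + (1 - t) *\<^sub>R x2))"

definition sv_dom :: "('x \<Rightarrow> 'z set) \<Rightarrow> 'x set" where
  "sv_dom f = {x. f x \<noteq> {}}"

definition sv_dirder :: "('x::real_vector \<Rightarrow> 'z::{real_vector,topological_space} set) \<Rightarrow> 'x \<Rightarrow> 'x \<Rightarrow> 'z set" where
  "sv_dirder g x u = (\<Inter>t0\<in>{t0::real. t0 > 0}.
      closure (convex hull (\<Union>t\<in>{t. 0 < t \<and> t < t0}. setscale (1 / t) (ominus (g (x + t *\<^sub>R u)) (g x)))))"

definition inf_add :: "ereal \<Rightarrow> ereal \<Rightarrow> ereal" where
  "inf_add r s = (if r = \<infinity> \<or> s = \<infinity> then \<infinity> else r + s)"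

(* r \<ominus> s = inf {t \<in> \<real>. r \<le> s \<dot>+ t}, inf of empty set = +\<infinity> *)
definition ediff :: "ereal \<Rightarrow> ereal \<Rightarrow> ereal" where
  "ediff r s = Inf (ereal ` {t::real. r \<le> inf_add s (ereal t)})"

definition phi :: "('x \<Rightarrow> 'z set) \<Rightarrow> ('z \<Rightarrow> real) \<Rightarrow> 'x \<Rightarrow> ereal" where
  "phi f zs x = Inf ((\<lambda>z. ereal (- zs z)) ` f x)"

definition phi_dirder :: "('x::real_vector \<Rightarrow> 'z set) \<Rightarrow> ('z \<Rightarrow> real) \<Rightarrow> 'x \<Rightarrow> 'x \<Rightarrow> ereal" where
  "phi_dirder f zs x u = (INF t\<in>{t::real. t > 0}.
      ereal (1 / t) * ediff (phi f zs (x + t *\<^sub>R u)) (phi f zs x))"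

definition fzs :: "('x \<Rightarrow> 'z set) \<Rightarrow> ('z \<Rightarrow> real) \<Rightarrow> 'x \<Rightarrow> 'z set" where
  "fzs f zs x = {z. phi f zs x \<le> ereal (- zs z)}"

end

theory Submission
  imports Defs
begin

text \<open>Scalarizing with \<open>z\<^sup>* \<in> C\<^sup>- - {0}\<close> turns \<open>f\<close> into the extended-real convex function
  \<open>\<phi> = \<phi>\<^sub>f\<^sub>,\<^sub>z\<^sub>*\<close>. The half-space \<open>{w. \<phi>'(x,u) \<le> -z\<^sup>*(w)}\<close> is closed, convex and contains every
  set-valued difference quotient of \<open>f\<close>, hence all of \<open>f'(x,u)\<close>; as \<open>0 \<in> 0\<^sup>+f(x\<^sub>0)\<close>, the set-valued
  Minty inequality gives \<open>\<phi>'(x,x\<^sub>0-x) \<le> 0\<close>.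
  Conversely, let \<open>z \<in> 0\<^sup>+f(x\<^sub>0)\<close>. Unless \<open>\<phi>(x\<^sub>0) = -\<infinity>\<close> (when all quotients of \<open>\<phi>\<close> near \<open>0\<close> are
  \<open>-\<infinity>\<close>), \<open>-z\<^sup>*\<close> is bounded below on \<open>f(x\<^sub>0)\<close>, so \<open>z\<^sup>*(z) \<le> 0\<close>. By convexity the quotients of \<open>\<phi>\<close>
  decrease to \<open>\<phi>'(x,x\<^sub>0-x) \<le> 0\<close> as \<open>t \<down> 0\<close>, so for every \<open>\<epsilon> > 0\<close> the point \<open>z - \<epsilon>v\<close> with
  \<open>z\<^sup>*(v) = 1\<close> is a difference quotient of the half-space valued \<open>f\<^sub>z\<^sub>*\<close> at arbitrarily small
  \<open>t\<close>. Letting \<open>\<epsilon> \<rightarrow> 0\<close> gives \<open>z \<in> f'\<^sub>z\<^sub>*(x,x\<^sub>0-x)\<close> for every \<open>z\<^sup>*\<close>, and weak regularity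
  intersects these sets to \<open>f'(x,x\<^sub>0-x)\<close>.\<close>

lemma Inf_range_ereal: "Inf (range ereal) = -\<infinity>"
  by (simp add: Inf_lower ereal_bot)

lemma ediff_MInf_left: "ediff (-\<infinity>) r = -\<infinity>"
  and ediff_PInf_right: "ediff r \<infinity> = -\<infinity>"
  by (simp_all add: ediff_def inf_add_def Inf_range_ereal del: range_ereal)

lemma ediff_real: "ediff r (ereal p) = r - ereal p"
proof -
  have "{t. r \<le> inf_add (ereal p) (ereal t)} = {t. r - ereal p \<le> ereal t}"
    by (cases r) (auto simp: inf_add_def algebra_simps)
  then show ?thesis
    by (cases r) (auto simp: ediff_def Inf_range_ereal top_ereal_def
        simp del: range_ereal intro!: antisym Inf_lower Inf_greatest)
qed

lemma ediff_le_iff: "ediff r s \<le> ereal c \<longleftrightarrow> r \<le> inf_add s (ereal c)"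
proof (cases s)
  case (real p)
  then show ?thesis by (cases r) (auto simp: ediff_real inf_add_def algebra_simps)
qed (auto simp: ediff_def inf_add_def top_ereal_def Inf_range_ereal simp del: range_ereal)

lemma inf_add_mono_left: "r \<le> r' \<Longrightarrow> inf_add r s \<le> inf_add r' s"
  by (auto simp: inf_add_def add_right_mono)

lemma ereal_inverse_mult_le_iff: "0 < s \<Longrightarrow> ereal (1 / s) * X \<le> ereal y \<longleftrightarrow> X \<le> ereal (s * y)"
  by (cases X) (auto simp: field_simps)

lemma ereal_convex_comb_less_split:
  fixes a b :: ereal
  assumes l: "0 < l" "l < 1" and fin: "a < \<infinity>" "b < \<infinity>"
    and less: "ereal l * a + ereal (1 - l) * b < ereal c"
  obtains c1 c2 where "a < ereal c1" "b < ereal c2" "l * c1 + (1 - l) * c2 = c"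
proof (cases a)
  case MInf
  obtain c2 where "b < ereal c2" using ereal_dense2[OF fin(2)] by blast
  then show ?thesis using that[of "(c - (1 - l) * c2) / l"] MInf l by simp
next
  case a: (real p)
  show ?thesis
  proof (cases b)
    case MInf
    then show ?thesis using that[of "p + 1" "(c - l * (p + 1)) / (1 - l)"] a l by simp
  next
    case (real q)
    define e where "e = c - (l * p + (1 - l) * q)"
    have "e > 0" using less a real by (simp add: e_def)
    then show ?thesis using that[of "p + e" "q + e"] a real by (simp add: e_def algebra_simps)
  qed (use fin in auto)
qed (use fin in auto)

lemma ereal_slope_mono:
  fixes P Q :: ereal
  assumes st: "0 < s" "s < t" and conv: "P \<le> ereal (s / t) * Q + ereal ((1 - s / t) * p)"
  shows "ereal (1 / s) * (P - ereal p) \<le> ereal (1 / t) * (Q - ereal p)"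
proof (cases Q)
  case (real q)
  have "(s / t) * q + (1 - s / t) * p = p + s * ((q - p) / t)"
    using st by (simp add: field_simps)
  then have P: "P \<le> ereal (p + s * ((q - p) / t))" using conv real by simp
  then show ?thesis
  proof (cases P)
    case (real r)
    then have "(r - p) / s \<le> (q - p) / t"
      using P st by (simp add: pos_divide_le_eq mult.commute)
    then show ?thesis using real \<open>Q = ereal q\<close> by simp
  qed (use st real in auto)
next
  case MInf
  then have "P = -\<infinity>" using conv st by simp
  then show ?thesis using st by simp
qed (use st in simp_all)

lemma mono_INF_less_near_zero:
  fixes g :: "real \<Rightarrow> 'a::complete_linorder"
  assumes mono: "\<And>s t. 0 < s \<Longrightarrow> s < t \<Longrightarrow> g s \<le> g t"
    and less: "(INF t\<in>{t. t > 0}. g t) < y" and t0: "0 < t0"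
  obtains s where "0 < s" "s < t0" "g s < y"
proof -
  obtain t where t: "0 < t" "g t < y" using less by (auto simp: INF_less_iff)
  show ?thesis
  proof (cases "t < t0")
    case False
    then have "g (t0 / 2) \<le> g t" using t t0 by (intro mono) auto
    then show ?thesis using that[of "t0 / 2"] t t0 by simp
  qed (use t that in auto)
qed

lemma phi_le: "a \<in> f y \<Longrightarrow> phi f zs y \<le> ereal (- zs a)"
  unfolding phi_def by (rule INF_lower)

lemma phi_less_iff: "phi f zs y < ereal c \<longleftrightarrow> (\<exists>a\<in>f y. - zs a < c)"
  unfolding phi_def by (simp add: INF_less_iff)

lemma phi_eq_PInf_iff: "phi f zs y = \<infinity> \<longleftrightarrow> f y = {}"
proof
  assume "phi f zs y = \<infinity>"
  then show "f y = {}" using phi_le[of _ f y zs] by force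
qed (simp add: phi_def top_ereal_def)

lemma sv_convex_mem:
  assumes "sv_convex f" "0 < l" "l < 1" "a \<in> f y1" "b \<in> f y2"
  shows "l *\<^sub>R a + (1 - l) *\<^sub>R b \<in> f (l *\<^sub>R y1 + (1 - l) *\<^sub>R y2)"
proof -
  have "l *\<^sub>R a + (1 - l) *\<^sub>R b \<in> setplus (setscale l (f y1)) (setscale (1 - l) (f y2))"
    using assms(4,5) unfolding setplus_def setscale_def by blast
  then show ?thesis
    using assms(1-3) closure_subset unfolding sv_convex_def oplus_def by blast
qed

lemma phi_convex_comb:
  assumes conv: "sv_convex f" and lin: "linear zs" and l: "0 < l" "l < 1"
    and ne: "f y1 \<noteq> {}" "f y2 \<noteq> {}"
  shows "phi f zs (l *\<^sub>R y1 + (1 - l) *\<^sub>R y2) \<le> ereal l * phi f zs y1 + ereal (1 - l) * phi f zs y2"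
proof (rule ccontr)
  assume "\<not> ?thesis"
  then have "ereal l * phi f zs y1 + ereal (1 - l) * phi f zs y2 < phi f zs (l *\<^sub>R y1 + (1 - l) *\<^sub>R y2)"
    by simp
  then obtain c where c: "ereal l * phi f zs y1 + ereal (1 - l) * phi f zs y2 < ereal c"
    and less: "ereal c < phi f zs (l *\<^sub>R y1 + (1 - l) *\<^sub>R y2)"
    by (blast dest: ereal_dense2)
  have fin: "phi f zs y1 < \<infinity>" "phi f zs y2 < \<infinity>"
    using ne phi_eq_PInf_iff[of f zs] by (simp_all add: less_top[symmetric])
  obtain c1 c2 where c12: "phi f zs y1 < ereal c1" "phi f zs y2 < ereal c2" "l * c1 + (1 - l) * c2 = c"
    using ereal_convex_comb_less_split[OF l fin c] by blast
  obtain a b where a: "a \<in> f y1" "- zs a < c1" and b: "b \<in> f y2" "- zs b < c2"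
    using c12(1,2) by (auto simp: phi_less_iff)
  have "phi f zs (l *\<^sub>R y1 + (1 - l) *\<^sub>R y2) \<le> ereal (- zs (l *\<^sub>R a + (1 - l) *\<^sub>R b))"
    by (rule phi_le) (rule sv_convex_mem[OF conv l a(1) b(1)])
  also have "- zs (l *\<^sub>R a + (1 - l) *\<^sub>R b) = l * (- zs a) + (1 - l) * (- zs b)"
    using lin by (simp add: linear_add linear_scale)
  also have "\<dots> < c"
    unfolding c12(3)[symmetric] using a b l by (intro add_strict_mono mult_strict_left_mono) auto
  finally show False using less by simp
qed

lemma phi_convex_comb_MInf:
  assumes "sv_convex f" "linear zs" "0 < l" "l < 1" "f y1 \<noteq> {}" "f y2 \<noteq> {}"
    and "phi f zs y1 = -\<infinity> \<or> phi f zs y2 = -\<infinity>"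
  shows "phi f zs (l *\<^sub>R y1 + (1 - l) *\<^sub>R y2) = -\<infinity>"
proof -
  have "phi f zs y1 \<noteq> \<infinity>" "phi f zs y2 \<noteq> \<infinity>"
    using assms(5,6) by (simp_all add: phi_eq_PInf_iff)
  then have "ereal l * phi f zs y1 + ereal (1 - l) * phi f zs y2 = -\<infinity>"
    using assms(3,4,7) by (cases "phi f zs y1"; cases "phi f zs y2") auto
  then show ?thesis using phi_convex_comb[OF assms(1-6)] by (simp only: ereal_infty_less_eq)
qed

lemma recc_linear_nonpos:
  assumes lin: "linear zs" and z: "z \<in> recc A" and b: "b \<in> A"
    and bdd: "(INF a\<in>A. ereal (- zs a)) \<noteq> -\<infinity>"
  shows "zs z \<le> 0"
proof (rule ccontr)
  assume "\<not> zs z \<le> 0"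
  have mem: "b + real n *\<^sub>R z \<in> A" for n
  proof (induction n)
    case (Suc n)
    have "(b + real n *\<^sub>R z) + z \<in> A"
      using z Suc unfolding recc_def setplus_def by blast
    then show ?case by (simp add: algebra_simps)
  qed (use b in simp)
  have le: "(INF a\<in>A. ereal (- zs a)) \<le> ereal (- zs b - real n * zs z)" for n
  proof -
    have "(INF a\<in>A. ereal (- zs a)) \<le> ereal (- zs (b + real n *\<^sub>R z))"
      by (rule INF_lower[OF mem])
    then show ?thesis using lin by (simp add: linear_add linear_scale)
  qed
  have "(INF a\<in>A. ereal (- zs a)) \<le> ereal M" for M
  proof -
    obtain n where "- zs b - M < real n * zs z"
      using reals_Archimedean3 \<open>\<not> zs z \<le> 0\<close> by (meson not_le)
    then show ?thesis using le[of n] by (simp add: order_trans)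
  qed
  with bdd show False using ereal_bot by blast
qed

definition phi_quotient :: "('x::real_vector \<Rightarrow> 'z set) \<Rightarrow> ('z \<Rightarrow> real) \<Rightarrow> 'x \<Rightarrow> 'x \<Rightarrow> real \<Rightarrow> ereal" where
  "phi_quotient f zs x u t = ereal (1 / t) * ediff (phi f zs (x + t *\<^sub>R u)) (phi f zs x)"

definition sv_quotient :: "('x::real_vector \<Rightarrow> 'z::real_vector set) \<Rightarrow> 'x \<Rightarrow> 'x \<Rightarrow> real \<Rightarrow> 'z set" where
  "sv_quotient g x u t = setscale (1 / t) (ominus (g (x + t *\<^sub>R u)) (g x))"

lemma phi_dirder_eq_INF: "phi_dirder f zs x u = (INF t\<in>{t. t > 0}. phi_quotient f zs x u t)"
  unfolding phi_dirder_def phi_quotient_def ..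

lemma sv_dirder_eq_INT: "sv_dirder g x u =
    (\<Inter>t0\<in>{t0. t0 > 0}. closure (convex hull (\<Union>t\<in>{t. 0 < t \<and> t < t0}. sv_quotient g x u t)))"
  unfolding sv_dirder_def sv_quotient_def ..

lemma phi_le_inf_add_of_translate:
  assumes lin: "linear zs" and v: "setplus (f x) {v} \<subseteq> f y"
  shows "phi f zs y \<le> inf_add (phi f zs x) (ereal (- zs v))"
proof (cases "phi f zs x = \<infinity>")
  case False
  have "phi f zs y - ereal (- zs v) \<le> phi f zs x"
    unfolding phi_def[of f zs x]
  proof (rule INF_greatest)
    fix a assume "a \<in> f x"
    then have "a + v \<in> f y" using v unfolding setplus_def by blast
    then have "phi f zs y \<le> ereal (- zs (a + v))" by (rule phi_le)
    also have "\<dots> = ereal (- zs a) + ereal (- zs v)" using lin by (simp add: linear_add)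
    finally show "phi f zs y - ereal (- zs v) \<le> ereal (- zs a)"
      by (simp add: ereal_minus_le_iff)
  qed
  then show ?thesis using False by (simp add: inf_add_def ereal_minus_le_iff)
qed (simp add: inf_add_def)

lemma phi_quotient_le_of_mem_sv_quotient:
  assumes lin: "linear zs" and t: "0 < t" and w: "w \<in> sv_quotient f x u t"
  shows "phi_quotient f zs x u t \<le> ereal (- zs w)"
proof -
  obtain v where wv: "w = (1 / t) *\<^sub>R v" and v: "setplus (f x) {v} \<subseteq> f (x + t *\<^sub>R u)"
    using w unfolding sv_quotient_def setscale_def ominus_def by auto
  have "t * - zs w = - zs v" using lin t by (simp add: wv linear_scale)
  then show ?thesis
    unfolding phi_quotient_def ereal_inverse_mult_le_iff[OF t] ediff_le_iff
    using phi_le_inf_add_of_translate[where f=f, OF lin v] by simp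
qed

lemma closed_convex_ereal_halfspace:
  fixes zs :: "'z::{real_vector,topological_space} \<Rightarrow> real"
  assumes lin: "linear zs" and cont: "continuous_on UNIV zs"
  shows "closed {w. D \<le> ereal (- zs w)} \<and> convex {w. D \<le> ereal (- zs w)}"
proof (cases D)
  case (real r)
  then have "{w. D \<le> ereal (- zs w)} = zs -` {..- r}" by auto
  moreover have "closed {w. zs w \<le> - r}"
    by (rule closed_Collect_le[OF cont continuous_on_const])
  ultimately show ?thesis
    using convex_linear_vimage[OF lin convex_real_interval(2)] by (simp add: vimage_def atMost_def)
qed auto

lemma phi_dirder_le_of_mem_sv_dirder:
  assumes lin: "linear zs" and cont: "continuous_on UNIV zs" and w: "w \<in> sv_dirder f x u"
  shows "phi_dirder f zs x u \<le> ereal (- zs w)"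
proof -
  define S where "S = {w. phi_dirder f zs x u \<le> ereal (- zs w)}"
  have "sv_quotient f x u t \<subseteq> S" if "0 < t" for t
  proof
    fix w assume "w \<in> sv_quotient f x u t"
    then have "phi_quotient f zs x u t \<le> ereal (- zs w)"
      by (rule phi_quotient_le_of_mem_sv_quotient[OF lin that])
    moreover have "phi_dirder f zs x u \<le> phi_quotient f zs x u t"
      unfolding phi_dirder_eq_INF using that by (intro INF_lower) simp
    ultimately show "w \<in> S" unfolding S_def by simp
  qed
  then have "closure (convex hull (\<Union>t\<in>{t. 0 < t \<and> t < 1}. sv_quotient f x u t)) \<subseteq> S"
    using closed_convex_ereal_halfspace[OF lin cont, of "phi_dirder f zs x u"] unfolding S_def[symmetric]
    by (intro closure_minimal hull_minimal) auto
  moreover have "w \<in> closure (convex hull (\<Union>t\<in>{t. 0 < t \<and> t < 1}. sv_quotient f x u t))"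
    using w unfolding sv_dirder_eq_INT by simp
  ultimately show ?thesis unfolding S_def by blast
qed

lemma lc_tvs_mem_closure_of_translates:
  fixes z v :: "'z::{real_vector,topological_space}"
  assumes Z: "lc_tvs TYPE('z)" and mem: "\<And>e. e > 0 \<Longrightarrow> z - e *\<^sub>R v \<in> U"
  shows "z \<in> closure U"
proof -
  have add: "continuous_on UNIV (\<lambda>p::'z \<times> 'z. fst p + snd p)"
    and scale: "continuous_on UNIV (\<lambda>p::real \<times> 'z. fst p *\<^sub>R snd p)"
    using Z unfolding lc_tvs_def by auto
  have "((\<lambda>n. (inverse (real (Suc n)), - v)) \<longlongrightarrow> (0, - v)) sequentially"
    by (intro tendsto_Pair LIMSEQ_inverse_real_of_nat tendsto_const)
  from continuous_on_tendsto_compose[OF scale this]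
  have "((\<lambda>n. (z, inverse (real (Suc n)) *\<^sub>R - v)) \<longlongrightarrow> (z, 0)) sequentially"
    by (intro tendsto_Pair tendsto_const) simp
  from continuous_on_tendsto_compose[OF add this]
  have "((\<lambda>n. z - inverse (real (Suc n)) *\<^sub>R v) \<longlongrightarrow> z) sequentially" by simp
  moreover have "z - inverse (real (Suc n)) *\<^sub>R v \<in> U" for n
    by (rule mem) simp
  then have "z - inverse (real (Suc n)) *\<^sub>R v \<in> closure U" for n
    using closure_subset by blast
  ultimately show ?thesis
    by (intro Lim_in_closed_set[OF closed_closure always_eventually]) auto
qed

lemma phi_quotient_mono:
  assumes conv: "sv_convex f" and lin: "linear zs" and px: "phi f zs x = ereal p"
    and st: "0 < s" "s < t"
  shows "phi_quotient f zs x u s \<le> phi_quotient f zs x u t"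
proof (cases "f (x + t *\<^sub>R u) = {}")
  case True
  then have "phi f zs (x + t *\<^sub>R u) = \<infinity>" by (simp add: phi_eq_PInf_iff)
  then show ?thesis using st by (simp add: phi_quotient_def px ediff_real)
next
  case False
  have "f x \<noteq> {}" using px phi_eq_PInf_iff[of f zs x] by simp
  have "x + s *\<^sub>R u = (s / t) *\<^sub>R (x + t *\<^sub>R u) + (1 - s / t) *\<^sub>R x"
    using st by (simp add: algebra_simps)
  then have conv_ineq: "phi f zs (x + s *\<^sub>R u) \<le> ereal (s / t) * phi f zs (x + t *\<^sub>R u) + ereal ((1 - s / t) * p)"
    using phi_convex_comb[OF conv lin _ _ False \<open>f x \<noteq> {}\<close>, of "s / t"] st px by simp
  then show ?thesis
    unfolding phi_quotient_def px ediff_real by (rule ereal_slope_mono[OF st])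
qed

lemma mem_sv_quotient_fzs:
  assumes lin: "linear zs" and s: "0 < s" and le: "phi_quotient f zs x u s \<le> ereal (- zs w)"
  shows "w \<in> sv_quotient (fzs f zs) x u s"
proof -
  have step: "phi f zs (x + s *\<^sub>R u) \<le> inf_add (phi f zs x) (ereal (s * - zs w))"
    using le unfolding phi_quotient_def ereal_inverse_mult_le_iff[OF s] ediff_le_iff .
  have "setplus (fzs f zs x) {s *\<^sub>R w} \<subseteq> fzs f zs (x + s *\<^sub>R u)"
  proof (rule subsetI)
    fix y assume "y \<in> setplus (fzs f zs x) {s *\<^sub>R w}"
    then obtain a where a: "phi f zs x \<le> ereal (- zs a)" and y: "y = a + s *\<^sub>R w"
      by (auto simp: setplus_def fzs_def)
    have "phi f zs (x + s *\<^sub>R u) \<le> inf_add (ereal (- zs a)) (ereal (s * - zs w))"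
      using step inf_add_mono_left[OF a] by (rule order_trans)
    then show "y \<in> fzs f zs (x + s *\<^sub>R u)"
      using lin by (simp add: fzs_def y inf_add_def linear_add linear_scale)
  qed
  moreover have "w = (1 / s) *\<^sub>R (s *\<^sub>R w)" using s by simp
  ultimately show ?thesis
    unfolding sv_quotient_def setscale_def ominus_def by blast
qed

lemma phi_quotient_small_near_zero:
  assumes conv: "sv_convex f" and lin: "linear zs" and x0: "f x0 \<noteq> {}"
    and dirder: "phi_dirder f zs x (x0 - x) \<le> 0" and z: "z \<in> recc (f x0)"
    and t0: "0 < t0" and e: "0 < e"
  obtains s where "0 < s" "s < t0" "phi_quotient f zs x (x0 - x) s \<le> ereal (- zs z + e)"
proof -
  \<comment> \<open>\<open>ediff r \<infinity> = -\<infinity>\<close>: when \<open>f x = {}\<close> every quotient is \<open>-\<infinity>\<close>.\<close>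
  have MInf: "phi_quotient f zs x (x0 - x) s = -\<infinity>"
    if "0 < s" "phi f zs (x + s *\<^sub>R (x0 - x)) = -\<infinity> \<or> f x = {}" for s
    using that by (auto simp: phi_quotient_def ediff_MInf_left ediff_PInf_right phi_eq_PInf_iff[THEN iffD2])
  consider "f x = {}" | "f x \<noteq> {}" "phi f zs x = -\<infinity> \<or> phi f zs x0 = -\<infinity>"
    | p p0 where "phi f zs x = ereal p" "phi f zs x0 = ereal p0"
    using x0 phi_eq_PInf_iff[of f zs] by (metis ereal_cases)
  then show ?thesis
  proof cases
    case 1
    then show ?thesis using that[of "t0 / 2"] MInf t0 by simp
  next
    case 2
    define s where "s = min t0 1 / 2"
    have s: "0 < s" "s < t0" "s < 1" using t0 by (auto simp: s_def)
    have "x + s *\<^sub>R (x0 - x) = s *\<^sub>R x0 + (1 - s) *\<^sub>R x" by (simp add: algebra_simps)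
    then have "phi f zs (x + s *\<^sub>R (x0 - x)) = -\<infinity>"
      using phi_convex_comb_MInf[OF conv lin s(1,3) x0 2(1)] 2(2) by auto
    then show ?thesis using that[OF s(1,2)] MInf[OF s(1)] by simp
  next
    case (3 p p0)
    obtain b where "b \<in> f x0" using x0 by blast
    then have "zs z \<le> 0"
      using recc_linear_nonpos[OF lin z] 3(2) by (auto simp: phi_def)
    obtain s where s: "0 < s" "s < t0" "phi_quotient f zs x (x0 - x) s < ereal e"
      using mono_INF_less_near_zero[of "phi_quotient f zs x (x0 - x)" "ereal e" t0]
        phi_quotient_mono[OF conv lin 3(1)] dirder e t0
      unfolding phi_dirder_eq_INF by (metis ereal_less(2) order_le_less_trans zero_ereal_def)
    moreover have "ereal e \<le> ereal (- zs z + e)" using \<open>zs z \<le> 0\<close> by simp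
    ultimately show ?thesis using that[OF s(1,2)] by (meson less_imp_le order_trans)
  qed
qed

lemma recc_subset_sv_dirder_fzs:
  fixes f :: "'x::real_vector \<Rightarrow> 'z::{real_vector,topological_space} set"
  assumes Z: "lc_tvs TYPE('z)" and conv: "sv_convex f" and lin: "linear zs"
    and nz: "zs \<noteq> (\<lambda>_. 0)" and x0: "f x0 \<noteq> {}"
    and dirder: "phi_dirder f zs x (x0 - x) \<le> 0" and z: "z \<in> recc (f x0)"
  shows "z \<in> sv_dirder (fzs f zs) x (x0 - x)"
proof -
  obtain v where v: "zs v = 1"
  proof -
    obtain v0 where "zs v0 \<noteq> 0" using nz by auto
    then show ?thesis using that[of "(1 / zs v0) *\<^sub>R v0"] lin by (simp add: linear_scale)
  qed
  have "z \<in> closure (\<Union>t\<in>{t. 0 < t \<and> t < t0}. sv_quotient (fzs f zs) x (x0 - x) t)" if t0: "0 < t0" for t0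
  proof (rule lc_tvs_mem_closure_of_translates[OF Z])
    fix e :: real assume e: "0 < e"
    obtain s where s: "0 < s" "s < t0" "phi_quotient f zs x (x0 - x) s \<le> ereal (- zs z + e)"
      using phi_quotient_small_near_zero[OF conv lin x0 dirder z t0 e] by blast
    have "- zs (z - e *\<^sub>R v) = - zs z + e" using lin v by (simp add: linear_diff linear_scale)
    then have "z - e *\<^sub>R v \<in> sv_quotient (fzs f zs) x (x0 - x) s"
      using s(3) by (intro mem_sv_quotient_fzs[OF lin s(1)]) simp
    then show "z - e *\<^sub>R v \<in> (\<Union>t\<in>{t. 0 < t \<and> t < t0}. sv_quotient (fzs f zs) x (x0 - x) t)"
      using s by blast
  qed
  then show ?thesis
    unfolding sv_dirder_eq_INT using closure_mono[OF hull_subset] by blast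
qed

theorem mainTheorem11:
  fixes f :: "'x::real_vector \<Rightarrow> 'z::{real_vector,t2_space} set"
    and C :: "'z set" and x0 :: 'x
  assumes Z: "lc_tvs TYPE('z)"
    and C: "closed C" "convex C" "cone C" "0 \<in> C"
    and Cne: "negdual C - {\<lambda>_. 0} \<noteq> {}"
    and fG: "\<forall>x. f x \<in> GC C"
    and fconv: "sv_convex f"
    and x0: "x0 \<in> sv_dom f"
  shows "((\<forall>x. recc (f x0) \<subseteq> sv_dirder f x (x0 - x)) \<longrightarrow>
           (\<forall>x. \<forall>zs \<in> negdual C - {\<lambda>_. 0}. phi_dirder f zs x (x0 - x) \<le> 0))
       \<and> ((\<forall>x u. sv_dirder f x u = (\<Inter>zs \<in> negdual C - {\<lambda>_. 0}. sv_dirder (fzs f zs) x u)) \<longrightarrow>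
           (\<forall>x. \<forall>zs \<in> negdual C - {\<lambda>_. 0}. phi_dirder f zs x (x0 - x) \<le> 0) \<longrightarrow>
           (\<forall>x. recc (f x0) \<subseteq> sv_dirder f x (x0 - x)))"
proof (intro conjI impI allI ballI subsetI)
  fix x zs
  assume minty: "\<forall>x. recc (f x0) \<subseteq> sv_dirder f x (x0 - x)" and zs: "zs \<in> negdual C - {\<lambda>_. 0}"
  have "0 \<in> recc (f x0)" by (simp add: recc_def setplus_def)
  then have "0 \<in> sv_dirder f x (x0 - x)" using minty by blast
  moreover have "linear zs" "continuous_on UNIV zs" using zs by (auto simp: negdual_def dualsp_def)
  ultimately show "phi_dirder f zs x (x0 - x) \<le> 0"
    using phi_dirder_le_of_mem_sv_dirder by (fastforce simp: linear_0 zero_ereal_def)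
next
  fix x z
  assume regular: "\<forall>x u. sv_dirder f x u = (\<Inter>zs \<in> negdual C - {\<lambda>_. 0}. sv_dirder (fzs f zs) x u)"
    and scalar_minty: "\<forall>x. \<forall>zs \<in> negdual C - {\<lambda>_. 0}. phi_dirder f zs x (x0 - x) \<le> 0"
    and z: "z \<in> recc (f x0)"
  have "f x0 \<noteq> {}" using x0 by (simp add: sv_dom_def)
  have "z \<in> sv_dirder (fzs f zs) x (x0 - x)" if zs: "zs \<in> negdual C - {\<lambda>_. 0}" for zs
  proof (rule recc_subset_sv_dirder_fzs[OF Z fconv _ _ \<open>f x0 \<noteq> {}\<close> _ z])
    show "linear zs" "zs \<noteq> (\<lambda>_. 0)" using zs by (auto simp: negdual_def dualsp_def)
    show "phi_dirder f zs x (x0 - x) \<le> 0" using scalar_minty zs by blast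
  qed
  then show "z \<in> sv_dirder f x (x0 - x)" using regular by blast
qed

end
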